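(* For every integer $i > 0$, the limit defining $d(W,\sigma^iW)$ exists if and only if the limit defining $d_0(W,\sigma^iW)$ exists, and in that case $$d(W,\sigma^i W) = \tfrac{4}{3}\, d_0(W,\sigma^i W).$$
   Context: Words are finite strings over $\{0,1\}$; $\alpha(i)$ is the $i$-th letter and $|\alpha|$ the length. Define $W_0 = 0$, $W_{m+1} = W_m W_m 1 W_m$, and let $W=W(0)W(1)\cdots$ (indexed from $0$) be the unique infinite word having every $W_m$ as an initial segment. For words $\alpha,\beta$ of equal length, the Hamming distance is $d(\alpha,\beta) = |\{i:\alpha(i)\ne\beta(i)\}|/|\alpha|$, and (if $\alpha$ contains a $0$) $d_0(\alpha,\beta) = |\{i : \alpha(i)=0,\ \beta(i)=1\}|/|\{i:\alpha(i)=0\}|$. For $i>0$ and $n\ge0$ let $\alpha_n = W(i)W(i+1)\cdots W(i+|W_n|-1)$ be the subword of $W$ of length $|W_n|$ starting at position $i$, and define $d(W,\sigma^iW) = \lim_{n\to\infty} d(W_n,\alpha_n)$ and $d_0(W,\sigma^iW) = \lim_{n\to\infty} d_0(W_n,\alpha_n)$. *)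

theory Defs
  imports Complex_Main
begin

text \<open>Finite words over {0,1} are lists of naturals with letters 0 and 1.\<close>

fun Wm :: "nat \<Rightarrow> nat list" where
  "Wm 0 = [0]"
| "Wm (Suc m) = Wm m @ Wm m @ [1] @ Wm m"

text \<open>The infinite word W (indexed from 0): the unique word having every W_m as a prefix.\<close>
definition Winf :: "nat \<Rightarrow> nat" where
  "Winf = (THE w. \<forall>m. \<forall>i < length (Wm m). w i = Wm m ! i)"

definition hdist :: "nat list \<Rightarrow> nat list \<Rightarrow> real" where
  "hdist a b = real (card {i. i < length a \<and> a ! i \<noteq> b ! i}) / real (length a)"

text \<open>The distance d_0 (meaningful when a contains a 0).\<close>
definition hdist0 :: "nat list \<Rightarrow> nat list \<Rightarrow> real" where
  "hdist0 a b = real (card {i. i < length a \<and> a ! i = 0 \<and> b ! i = 1})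
              / real (card {i. i < length a \<and> a ! i = 0})"

definition alpha :: "nat \<Rightarrow> nat \<Rightarrow> nat list" where
  "alpha i n = map (\<lambda>j. Winf (i + j)) [0..<length (Wm n)]"

end

theory Submission
  imports Defs
begin

(* Let L_n and s_n be the length and the number of 1s of W_n.  Every factor of W of length L_n
   contains s_n or s_n + 1 ones: in W_(m+1) = W_m W_m 1 W_m such a factor lies inside a copy of W_m
   or straddles a junction, where it is a factor of W_n W_n (a rotation of W_n) or of W_n 1 W_n.
   Counting mismatches then gives L_n d(W_n, alpha_n) = 2 A - e with e in {0, 1}, where A counts the
   positions 0 -> 1, while W_n has (2 L_n + 1) / 3 zeros.  Hence
   d(W_n, alpha_n) - 4/3 d_0(W_n, alpha_n) = O(1 / L_n). *)

lemma length_Wm_ge: "Suc m \<le> length (Wm m)"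
  by (induction m) auto

lemma length_Wm_mono: "n \<le> m \<Longrightarrow> length (Wm n) \<le> length (Wm m)"
  by (induction m rule: dec_induct) auto

lemma length_Wm_eq: "length (Wm m) = 3 * sum_list (Wm m) + 1"
  by (induction m) auto

lemma set_Wm: "set (Wm m) \<subseteq> {0, 1}"
  by (induction m) auto

lemma take_length_Wm: "n \<le> m \<Longrightarrow> take (length (Wm n)) (Wm m) = Wm n"
  by (induction m rule: dec_induct) (auto simp: length_Wm_mono)

lemma drop_length_Wm: "n \<le> m \<Longrightarrow> drop (length (Wm m) - length (Wm n)) (Wm m) = Wm n"
proof (induction m rule: dec_induct)
  case (step m)
  then have "length (Wm n) \<le> length (Wm m)" by (simp add: length_Wm_mono)
  with step show ?case by (simp add: Suc_diff_le)
qed simp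

lemma Winf_nth:
  assumes "k < length (Wm m)"
  shows "Winf k = Wm m ! k"
proof -
  have Wm_nth: "Wm m ! k = Wm m' ! k" if "m \<le> m'" "k < length (Wm m)" for m m' k
    using take_length_Wm[OF that(1)] that(2) by (metis nth_take)
  have agree: "Wm m ! k = Wm k ! k" if "k < length (Wm m)" for m k
    using Wm_nth[of m k k] Wm_nth[of k m k] length_Wm_ge[of k] that
    by (cases "m \<le> k") auto
  have "Winf = (\<lambda>k. Wm k ! k)"
    unfolding Winf_def
  proof (rule the_equality)
    show "\<forall>m. \<forall>k < length (Wm m). Wm k ! k = Wm m ! k"
      using agree by simp
  next
    fix w assume "\<forall>m. \<forall>k < length (Wm m). w k = Wm m ! k"
    then show "w = (\<lambda>k. Wm k ! k)"
      using length_Wm_ge by (fastforce simp: Suc_le_eq)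
  qed
  then show ?thesis using agree[OF assms] by metis
qed

lemma alpha_eq_window:
  assumes "n \<le> m" "i + length (Wm n) \<le> length (Wm m)"
  shows "alpha i n = take (length (Wm n)) (drop i (Wm m))"
  unfolding alpha_def
  by (rule nth_equalityI) (use assms in \<open>auto simp: Winf_nth\<close>)

definition window_sums_in :: "nat \<Rightarrow> nat set \<Rightarrow> nat list \<Rightarrow> bool" where
  "window_sums_in k S xs \<longleftrightarrow> (\<forall>j. j + k \<le> length xs \<longrightarrow> sum_list (take k (drop j xs)) \<in> S)"

lemma window_sums_in_mono: "window_sums_in k S xs \<Longrightarrow> S \<subseteq> T \<Longrightarrow> window_sums_in k T xs"
  unfolding window_sums_in_def by blast

lemma window_sums_in_append_middle:
  assumes "k \<le> length xs" "k \<le> length ys"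
    and "window_sums_in k S xs" "window_sums_in k S ys"
    and "window_sums_in k S (drop (length xs - k) xs @ zs @ take k ys)"
  shows "window_sums_in k S (xs @ zs @ ys)"
  unfolding window_sums_in_def
proof (intro allI impI)
  fix j assume j: "j + k \<le> length (xs @ zs @ ys)"
  consider "j + k \<le> length xs" | "length xs + length zs \<le> j"
    | "length xs < j + k" "j < length xs + length zs"
    by linarith
  then show "sum_list (take k (drop j (xs @ zs @ ys))) \<in> S"
  proof cases
    case 1
    then show ?thesis using assms(3) by (simp add: window_sums_in_def)
  next
    case 2
    then have "take k (drop j (xs @ zs @ ys)) = take k (drop (j - length xs - length zs) ys)"
      by simp
    then show ?thesis using assms(4) j 2 by (simp add: window_sums_in_def)
  next
    case 3
    define us where "us = take (length xs - k) xs"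
    have "xs @ zs @ ys = us @ (drop (length xs - k) xs @ zs @ take k ys) @ drop k ys"
      by (simp add: us_def)
    then have "take k (drop j (xs @ zs @ ys))
        = take k (drop (j - length us) (drop (length xs - k) xs @ zs @ take k ys))"
      using 3 assms(1,2) by (simp add: us_def)
    moreover have "j - length us + k \<le> length (drop (length xs - k) xs @ zs @ take k ys)"
      using 3 assms(1,2) by (simp add: us_def)
    ultimately show ?thesis using assms(5) unfolding window_sums_in_def by presburger
  qed
qed

lemma window_sums_in_double: "window_sums_in (length w) {sum_list w} (w @ w)"
  unfolding window_sums_in_def
proof (intro allI impI)
  fix j assume "j + length w \<le> length (w @ w)"
  then have "take (length w) (drop j (w @ w)) = drop j w @ take j w" by simp
  then show "sum_list (take (length w) (drop j (w @ w))) \<in> {sum_list w}"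
    by (metis add.commute append_take_drop_id singletonI sum_list_append)
qed

lemma window_sums_in_double_with_one:
  assumes "set w \<subseteq> {0, 1}"
  shows "window_sums_in (length w) {sum_list w, Suc (sum_list w)} (w @ [1] @ w)"
  unfolding window_sums_in_def
proof (intro allI impI)
  fix j assume j: "j + length w \<le> length (w @ [1] @ w)"
  show "sum_list (take (length w) (drop j (w @ [1] @ w))) \<in> {sum_list w, Suc (sum_list w)}"
  proof (cases j)
    case 0
    then show ?thesis by simp
  next
    case (Suc b)
    show ?thesis
    proof (cases "b < length w")
      case True
      then have "take (length w) (drop j (w @ [1] @ w)) = drop (Suc b) w @ [1] @ take b w"
        using Suc by simp
      moreover have "sum_list w = sum_list (take b w) + w ! b + sum_list (drop (Suc b) w)"
        using id_take_nth_drop[OF True] by (metis add.assoc sum_list.Cons sum_list_append)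
      moreover have "w ! b \<in> {0, 1}" using assms True nth_mem by blast
      ultimately show ?thesis by auto
    next
      case False
      then show ?thesis using j Suc by simp
    qed
  qed
qed

lemma window_sums_in_Wm:
  assumes "n \<le> m"
  shows "window_sums_in (length (Wm n)) {sum_list (Wm n), Suc (sum_list (Wm n))} (Wm m)"
  using assms
proof (induction m rule: dec_induct)
  case base
  show ?case by (simp add: window_sums_in_def)
next
  case (step m)
  let ?W = "Wm n" and ?X = "Wm m"
  let ?L = "length ?W" and ?S = "{sum_list ?W, Suc (sum_list ?W)}"
  have L: "?L \<le> length ?X" using step(1) by (rule length_Wm_mono)
  have pre: "take ?L ?X = ?W" using step(1) by (rule take_length_Wm)
  have suf: "drop (length ?X - ?L) ?X = ?W" using step(1) by (rule drop_length_Wm)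
  have "window_sums_in ?L ?S (?W @ [1] @ ?W)"
    using set_Wm by (rule window_sums_in_double_with_one)
  then have sep: "window_sums_in ?L ?S (?X @ [1] @ ?X)"
    using window_sums_in_append_middle[OF L L step(3) step(3)] by (simp only: pre suf)
  have "window_sums_in ?L ?S (?W @ [] @ ?W)"
    using window_sums_in_mono[OF window_sums_in_double] by simp
  moreover have "take ?L (?X @ [1] @ ?X) = ?W" using L pre by simp
  ultimately show ?case
    using window_sums_in_append_middle[OF L _ step(3) sep, where zs="[]"] L suf by simp
qed

lemma length_alpha: "length (alpha i n) = length (Wm n)"
  by (simp add: alpha_def)

lemma alpha_window_of_Wm:
  obtains m where "n \<le> m" "alpha i n = take (length (Wm n)) (drop i (Wm m))"
    and "i + length (Wm n) \<le> length (Wm m)"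
proof
  let ?m = "i + length (Wm n)"
  show "n \<le> ?m" "i + length (Wm n) \<le> length (Wm ?m)"
    using length_Wm_ge[of n] length_Wm_ge[of ?m] by simp_all
  then show "alpha i n = take (length (Wm n)) (drop i (Wm ?m))"
    by (rule alpha_eq_window)
qed

lemma set_alpha: "set (alpha i n) \<subseteq> {0, 1}"
proof -
  obtain m where "alpha i n = take (length (Wm n)) (drop i (Wm m))"
    using alpha_window_of_Wm .
  then show ?thesis
    using order.trans[OF order.trans[OF set_take_subset set_drop_subset] set_Wm] by simp
qed

lemma sum_list_alpha: "sum_list (alpha i n) \<in> {sum_list (Wm n), Suc (sum_list (Wm n))}"
proof -
  obtain m where "n \<le> m" "alpha i n = take (length (Wm n)) (drop i (Wm m))"
    and "i + length (Wm n) \<le> length (Wm m)"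
    using alpha_window_of_Wm .
  with window_sums_in_Wm[OF \<open>n \<le> m\<close>, unfolded window_sums_in_def, rule_format, of i]
  show ?thesis by simp
qed

lemma card_filter_lessThan: "card {i. i < (L::nat) \<and> P i} = (\<Sum>i<L. if P i then 1 else (0::nat))"
proof -
  have "(\<Sum>i<L. if P i then 1 else (0::nat)) = (\<Sum>i\<in>{..<L} \<inter> {x. P x}. 1)"
    by (subst sum.If_cases) auto
  also have "{..<L} \<inter> {x. P x} = {i. i < L \<and> P i}" by auto
  finally show ?thesis by simp
qed

lemma card_mismatch_binary:
  fixes a b :: "nat list"
  assumes len: "length b = length a" and "set a \<subseteq> {0, 1}" "set b \<subseteq> {0, 1}"
  shows "card {i. i < length a \<and> a ! i \<noteq> b ! i} + sum_list b
    = 2 * card {i. i < length a \<and> a ! i = 0 \<and> b ! i = 1} + sum_list a"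
proof -
  let ?L = "length a"
  have bin: "a ! i \<in> {0, 1}" "b ! i \<in> {0, 1}" if "i < ?L" for i
    using assms that nth_mem by (metis subsetD)+
  have "card {i. i < ?L \<and> a ! i \<noteq> b ! i} + sum_list b
      = (\<Sum>i<?L. (if a ! i \<noteq> b ! i then 1 else 0) + b ! i)"
    by (simp add: card_filter_lessThan sum_list_sum_nth atLeast0LessThan len sum.distrib)
  also have "\<dots> = (\<Sum>i<?L. 2 * (if a ! i = 0 \<and> b ! i = 1 then 1 else 0) + a ! i)"
  proof (rule sum.cong)
    fix i assume "i \<in> {..<?L}"
    with bin[of i] show "(if a ! i \<noteq> b ! i then 1 else 0) + b ! i
        = 2 * (if a ! i = 0 \<and> b ! i = 1 then 1 else 0) + a ! i"
      by auto
  qed simp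
  also have "\<dots> = 2 * card {i. i < ?L \<and> a ! i = 0 \<and> b ! i = 1} + sum_list a"
    by (simp add: card_filter_lessThan sum_list_sum_nth atLeast0LessThan sum.distrib
        sum_distrib_left)
  finally show ?thesis .
qed

lemma card_zeros_binary:
  fixes a :: "nat list"
  assumes "set a \<subseteq> {0, 1}"
  shows "card {i. i < length a \<and> a ! i = 0} + sum_list a = length a"
proof -
  have "card {i. i < length a \<and> a ! i = 0} + sum_list a
      = (\<Sum>i<length a. (if a ! i = 0 then 1 else 0) + a ! i)"
    by (simp add: card_filter_lessThan sum_list_sum_nth atLeast0LessThan sum.distrib)
  also have "\<dots> = (\<Sum>i<length a. 1)"
  proof (rule sum.cong)
    fix i assume "i \<in> {..<length a}"
    then have "a ! i \<in> {0, 1}" using assms nth_mem by blast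
    then show "(if a ! i = 0 then 1 else 0) + a ! i = 1" by auto
  qed simp
  finally show ?thesis by simp
qed

lemma ratio_diff_bound:
  fixes D A Z L e :: real
  assumes "L \<ge> 1" "3 * Z = 2 * L + 1" "D + e = 2 * A" "0 \<le> e" "e \<le> 1" "0 \<le> A" "A \<le> Z"
  shows "\<bar>D / L - 4/3 * (A / Z)\<bar> \<le> 1 / L"
proof -
  define x where "x = 2 * A / (2 * L + 1) - e"
  have Z: "Z = (2 * L + 1) / 3" and D: "D = 2 * A - e" using assms(2,3) by simp_all
  have "L \<noteq> 0" "2 * L + 1 \<noteq> 0" using assms(1) by auto
  then have eq: "D / L - 4/3 * (A / Z) = x / L"
    unfolding Z D x_def by (simp add: field_simps)
  have "0 \<le> 2 * A / (2 * L + 1)" "2 * A / (2 * L + 1) \<le> 1"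
    using assms by (simp_all add: divide_simps)
  then have "\<bar>x\<bar> \<le> 1" using assms(4,5) unfolding x_def by linarith
  have "\<bar>x / L\<bar> = \<bar>x\<bar> / L" using assms(1) by (simp add: abs_divide)
  also have "\<dots> \<le> 1 / L" using \<open>\<bar>x\<bar> \<le> 1\<close> assms(1) by (simp add: divide_right_mono)
  finally show ?thesis using eq by simp
qed

lemma hdist_hdist0_close:
  fixes a b :: "nat list"
  assumes len: "length b = length a" and bin: "set a \<subseteq> {0, 1}" "set b \<subseteq> {0, 1}"
    and ones: "sum_list b \<in> {sum_list a, Suc (sum_list a)}"
    and zeros: "length a = 3 * sum_list a + 1"
  shows "\<bar>hdist a b - 4/3 * hdist0 a b\<bar> \<le> 1 / length a"
proof -
  define D where "D = card {i. i < length a \<and> a ! i \<noteq> b ! i}"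
  define A where "A = card {i. i < length a \<and> a ! i = 0 \<and> b ! i = 1}"
  define Z where "Z = card {i. i < length a \<and> a ! i = 0}"
  define e where "e = sum_list b - sum_list a"
  have "D + sum_list b = 2 * A + sum_list a"
    unfolding D_def A_def by (rule card_mismatch_binary[OF len bin])
  then have De: "D + e = 2 * A" and e: "e \<le> 1"
    using ones unfolding e_def by auto
  have "Z + sum_list a = length a"
    unfolding Z_def by (rule card_zeros_binary[OF bin(1)])
  then have Z: "3 * Z = 2 * length a + 1" using zeros by linarith
  have "A \<le> Z" unfolding A_def Z_def by (intro card_mono) auto
  have "real D + real e = 2 * real A" using De by (simp flip: of_nat_add)
  moreover have "3 * real Z = 2 * real (length a) + 1" using Z by (simp flip: of_nat_add)
  ultimately have "\<bar>real D / length a - 4/3 * (real A / real Z)\<bar> \<le> 1 / length a"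
    using zeros e \<open>A \<le> Z\<close> by (intro ratio_diff_bound[where e = "real e"]) simp_all
  then show ?thesis unfolding hdist_def hdist0_def D_def A_def Z_def .
qed

lemma LIMSEQ_iff_of_diff_scaled:
  fixes f g :: "nat \<Rightarrow> 'a::real_normed_field"
  assumes "(\<lambda>n. f n - c * g n) \<longlonglongrightarrow> 0" "c \<noteq> 0"
  shows "f \<longlonglongrightarrow> c * l \<longleftrightarrow> g \<longlonglongrightarrow> l"
proof
  assume "f \<longlonglongrightarrow> c * l"
  then have "(\<lambda>n. (f n - (f n - c * g n)) / c) \<longlonglongrightarrow> (c * l - 0) / c"
    by (intro tendsto_intros assms)
  then show "g \<longlonglongrightarrow> l" using assms(2) by simp
next
  assume "g \<longlonglongrightarrow> l"
  then have "(\<lambda>n. (f n - c * g n) + c * g n) \<longlonglongrightarrow> 0 + c * l"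
    by (intro tendsto_intros assms)
  then show "f \<longlonglongrightarrow> c * l" by simp
qed

lemma convergent_lim_of_diff_scaled:
  fixes f g :: "nat \<Rightarrow> 'a::real_normed_field"
  assumes "(\<lambda>n. f n - c * g n) \<longlonglongrightarrow> 0" "c \<noteq> 0"
  shows "(convergent f \<longleftrightarrow> convergent g) \<and> (convergent g \<longrightarrow> lim f = c * lim g)"
proof (intro conjI impI iffI)
  assume "convergent f"
  then obtain l where "f \<longlonglongrightarrow> l" by (auto simp: convergent_def)
  then have "f \<longlonglongrightarrow> c * (l / c)" using assms(2) by simp
  then show "convergent g" using LIMSEQ_iff_of_diff_scaled[OF assms] convergent_def by blast
next
  assume "convergent g"
  then have "f \<longlonglongrightarrow> c * lim g" using LIMSEQ_iff_of_diff_scaled[OF assms]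
    by (simp add: convergent_LIMSEQ_iff)
  then show "convergent f" "lim f = c * lim g" by (auto simp: convergent_def limI)
qed

theorem lemma3:
  fixes i :: nat
  assumes "i > 0"
  shows "(convergent (\<lambda>n. hdist (Wm n) (alpha i n)) \<longleftrightarrow>
            convergent (\<lambda>n. hdist0 (Wm n) (alpha i n)))
       \<and> (convergent (\<lambda>n. hdist0 (Wm n) (alpha i n)) \<longrightarrow>
            lim (\<lambda>n. hdist (Wm n) (alpha i n)) = 4 / 3 * lim (\<lambda>n. hdist0 (Wm n) (alpha i n)))"
proof (rule convergent_lim_of_diff_scaled)
  have close: "\<bar>hdist (Wm n) (alpha i n) - 4/3 * hdist0 (Wm n) (alpha i n)\<bar>
      \<le> inverse (real (Suc n))" for n
  proof -
    have "\<bar>hdist (Wm n) (alpha i n) - 4/3 * hdist0 (Wm n) (alpha i n)\<bar> \<le> 1 / length (Wm n)"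
      by (rule hdist_hdist0_close[OF length_alpha set_Wm set_alpha sum_list_alpha length_Wm_eq])
    also have "\<dots> \<le> 1 / real (Suc n)"
      using length_Wm_ge[of n] by (simp add: frac_le)
    finally show ?thesis by (simp add: inverse_eq_divide)
  qed
  show "(\<lambda>n. hdist (Wm n) (alpha i n) - 4/3 * hdist0 (Wm n) (alpha i n)) \<longlonglongrightarrow> 0"
    using close by (intro tendsto_0_le[OF LIMSEQ_inverse_real_of_nat, where K = 1]) simp
qed simp

end
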